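(* Let $(M,g)$ be a Lorentzian manifold of dimension $n+2$, $p\in M$, and let $T_{abcd}$ be a rank 4 tensor at $p$ with $T_{abcd}=-T_{bacd}=T_{cdab}$. Suppose there is a null frame $(\ell,n,m_3,\dots,m_{n+2})$ of $T_pM$ with respect to which all frame components of $T_{abcd}$ of strictly positive boost weight vanish (i.e. $T$ is of primary alignment type II or more special). Let $\mathsf T:\wedge^2T_pM\to\wedge^2T_pM$, $F^{ab}\mapsto \tfrac12 T^{ab}{}_{cd}F^{cd}$, and $\mathsf T^s:S^2(T_pM)\to S^2(T_pM)$, $Z^{ab}\mapsto T^{a}{}_{c}{}^{b}{}_{d}Z^{cd}$. If both $\mathsf T$ and $\mathsf T^s$ are nilpotent, then $T_{abcd}$ is of type III or N, i.e. a null frame exists in which all components of $T_{abcd}$ of boost weight $0$, $1$ and $2$ vanish.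
   Context: A null frame $(\ell,n,m_i)$ consists of null vectors $\ell,n$ with $g(\ell,n)=1$ and orthonormal spacelike vectors $m_i$ orthogonal to $\ell,n$. Frame index $0$ refers to $\ell$, index $1$ to $n$, and $i,j,\dots$ to the $m_i$. The boost weight of a frame component $T_{A_1A_2A_3A_4}$ is the number of indices equal to $0$ minus the number of indices equal to $1$. $\wedge^2T_pM$ denotes contravariant bivectors and $S^2(T_pM)$ symmetric contravariant 2-tensors at $p$. *)

theory Defs
  imports "HOL-Analysis.Analysis"
begin

text \<open>The tangent space T_pM is modelled as real^'d (dimension CARD('d) = n+2).
  The metric g and the covariant tensor T are given by their components
  in the standard coordinate basis of real^'d.\<close>

definition gform :: "('d::finite \<Rightarrow> 'd \<Rightarrow> real) \<Rightarrow> real^'d \<Rightarrow> real^'d \<Rightarrow> real" where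
  "gform g u v = (\<Sum>a\<in>UNIV. \<Sum>b\<in>UNIV. g a b * u$a * v$b)"

definition lorentzian :: "('d::finite \<Rightarrow> 'd \<Rightarrow> real) \<Rightarrow> bool" where
  "lorentzian g \<longleftrightarrow> (\<forall>a b. g a b = g b a) \<and>
     (\<exists>(e :: 'd \<Rightarrow> real^'d) t. \<forall>i j. gform g (e i) (e j) =
        (if i \<noteq> j then 0 else if i = t then -1 else 1))"

definition ginv :: "('d::finite \<Rightarrow> 'd \<Rightarrow> real) \<Rightarrow> 'd \<Rightarrow> 'd \<Rightarrow> real" where
  "ginv g a b = matrix_inv (\<chi> i j. g i j) $ a $ b"

definition tform :: "('d::finite \<Rightarrow> 'd \<Rightarrow> 'd \<Rightarrow> 'd \<Rightarrow> real) \<Rightarrow>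
    real^'d \<Rightarrow> real^'d \<Rightarrow> real^'d \<Rightarrow> real^'d \<Rightarrow> real" where
  "tform T u v w z = (\<Sum>a\<in>UNIV. \<Sum>b\<in>UNIV. \<Sum>c\<in>UNIV. \<Sum>d\<in>UNIV.
       T a b c d * u$a * v$b * w$c * z$d)"

text \<open>Frame indices: FL = 0 (ell), FN = 1 (n), FM i = m_{i+3}, i < n.\<close>
datatype fidx = FL | FN | FM nat

definition fidx_ok :: "nat \<Rightarrow> fidx \<Rightarrow> bool" where
  "fidx_ok k A = (case A of FM i \<Rightarrow> i < k | _ \<Rightarrow> True)"

fun bw :: "fidx \<Rightarrow> int" where
  "bw FL = 1" | "bw FN = -1" | "bw (FM i) = 0"

fun fvec :: "real^'d \<Rightarrow> real^'d \<Rightarrow> (nat \<Rightarrow> real^'d) \<Rightarrow> fidx \<Rightarrow> real^'d" where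
  "fvec l nv m FL = l" | "fvec l nv m FN = nv" | "fvec l nv m (FM i) = m i"

definition null_frame :: "('d::finite \<Rightarrow> 'd \<Rightarrow> real) \<Rightarrow> real^'d \<Rightarrow> real^'d \<Rightarrow> (nat \<Rightarrow> real^'d) \<Rightarrow> bool" where
  "null_frame g l nv m \<longleftrightarrow>
     gform g l l = 0 \<and> gform g nv nv = 0 \<and> gform g l nv = 1 \<and>
     (\<forall>i < CARD('d) - 2. gform g l (m i) = 0 \<and> gform g nv (m i) = 0) \<and>
     (\<forall>i < CARD('d) - 2. \<forall>j < CARD('d) - 2. gform g (m i) (m j) = (if i = j then 1 else 0))"

definition fcomp :: "('d::finite \<Rightarrow> 'd \<Rightarrow> 'd \<Rightarrow> 'd \<Rightarrow> real) \<Rightarrow> real^'d \<Rightarrow> real^'d \<Rightarrow> (nat \<Rightarrow> real^'d)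
    \<Rightarrow> fidx \<Rightarrow> fidx \<Rightarrow> fidx \<Rightarrow> fidx \<Rightarrow> real" where
  "fcomp T l nv m A B C D = tform T (fvec l nv m A) (fvec l nv m B) (fvec l nv m C) (fvec l nv m D)"

definition comps_vanish :: "('d::finite \<Rightarrow> 'd \<Rightarrow> 'd \<Rightarrow> 'd \<Rightarrow> real) \<Rightarrow> real^'d \<Rightarrow> real^'d \<Rightarrow> (nat \<Rightarrow> real^'d)
    \<Rightarrow> int set \<Rightarrow> bool" where
  "comps_vanish T l nv m W \<longleftrightarrow>
     (\<forall>A B C D. fidx_ok (CARD('d) - 2) A \<and> fidx_ok (CARD('d) - 2) B \<and>
        fidx_ok (CARD('d) - 2) C \<and> fidx_ok (CARD('d) - 2) D \<and>
        bw A + bw B + bw C + bw D \<in> W \<longrightarrow> fcomp T l nv m A B C D = 0)"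

definition bivectors :: "('d::finite \<Rightarrow> 'd \<Rightarrow> real) set" where
  "bivectors = {F. \<forall>a b. F a b = - F b a}"

definition sym2 :: "('d::finite \<Rightarrow> 'd \<Rightarrow> real) set" where
  "sym2 = {Z. \<forall>a b. Z a b = Z b a}"

definition Top :: "('d::finite \<Rightarrow> 'd \<Rightarrow> real) \<Rightarrow> ('d \<Rightarrow> 'd \<Rightarrow> 'd \<Rightarrow> 'd \<Rightarrow> real) \<Rightarrow>
    ('d \<Rightarrow> 'd \<Rightarrow> real) \<Rightarrow> ('d \<Rightarrow> 'd \<Rightarrow> real)" where
  "Top g T F = (\<lambda>a b. (1/2) * (\<Sum>e\<in>UNIV. \<Sum>f\<in>UNIV. \<Sum>c\<in>UNIV. \<Sum>d\<in>UNIV.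
      ginv g a e * ginv g b f * T e f c d * F c d))"

definition Tsop :: "('d::finite \<Rightarrow> 'd \<Rightarrow> real) \<Rightarrow> ('d \<Rightarrow> 'd \<Rightarrow> 'd \<Rightarrow> 'd \<Rightarrow> real) \<Rightarrow>
    ('d \<Rightarrow> 'd \<Rightarrow> real) \<Rightarrow> ('d \<Rightarrow> 'd \<Rightarrow> real)" where
  "Tsop g T Z = (\<lambda>a b. (\<Sum>e\<in>UNIV. \<Sum>f\<in>UNIV. \<Sum>c\<in>UNIV. \<Sum>d\<in>UNIV.
      ginv g a e * ginv g b f * T e c f d * Z c d))"

definition nilpotent_on :: "('d \<Rightarrow> 'd \<Rightarrow> real) set \<Rightarrow> (('d \<Rightarrow> 'd \<Rightarrow> real) \<Rightarrow> ('d \<Rightarrow> 'd \<Rightarrow> real)) \<Rightarrow> bool" where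
  "nilpotent_on S f \<longleftrightarrow> (\<exists>k. \<forall>x\<in>S. (f ^^ k) x = (\<lambda>a b. 0))"

end

theory Submission
  imports Defs
begin

text \<open>Write the frame components of a contravariant 2-tensor as an array over pairs of frame
  indices, graded by boost weight. Since T has no components of positive boost weight, both
  \<open>\<T>\<close> and \<open>\<T>\<^sup>s\<close> never raise the boost weight, so their restrictions to a fixed boost weight,
  followed by projection onto that weight, are nilpotent as well. At boost weight 0 the frame
  pairing \<open>z \<mapsto> \<Sum> z\<^sub>A\<^sub>B z\<^sup>A\<^sup>B\<close> is positive definite on symmetric tensors and on bivectors without an
  \<open>\<ell>\<and>n\<close> part, and both restricted operators are self-adjoint for it; a self-adjoint nilpotent
  operator for a definite form vanishes. At boost weight 1 the restricted operators become
  antisymmetric matrices acting on the \<open>m\<^sub>i\<close>-components, and a nilpotent antisymmetric real matrix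
  vanishes. Together these kill every boost-weight-0 component; the components of weight 1 and 2
  vanished already.\<close>

section \<open>Frame indices\<close>

definition fidx_set :: "nat \<Rightarrow> fidx set" where
  "fidx_set n = {A. fidx_ok n A}"

lemma fidx_set_eq: "fidx_set n = {FL, FN} \<union> FM ` {..<n}"
  by (auto simp: fidx_set_def fidx_ok_def split: fidx.splits) (metis fidx.exhaust imageI lessThan_iff)

lemma finite_fidx_set [simp]: "finite (fidx_set n)"
  by (simp add: fidx_set_eq)

lemma mem_fidx_set [simp]: "FL \<in> fidx_set n" "FN \<in> fidx_set n" "FM i \<in> fidx_set n \<longleftrightarrow> i < n"
  by (auto simp: fidx_set_def fidx_ok_def)

lemma sum_fidx_set: "sum f (fidx_set n) = f FL + f FN + (\<Sum>j<n. f (FM j))"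
proof -
  have "sum f (fidx_set n) = sum f {FL, FN} + sum f (FM ` {..<n})"
    unfolding fidx_set_eq by (rule sum.union_disjoint) auto
  also have "sum f (FM ` {..<n}) = (\<Sum>j<n. f (FM j))"
    by (subst sum.reindex) (auto simp: inj_on_def)
  finally show ?thesis by simp
qed

lemma card_fidx_set: "card (fidx_set n) = n + 2"
proof -
  have "card (fidx_set n) = card {FL, FN} + card (FM ` {..<n})"
    unfolding fidx_set_eq by (rule card_Un_disjoint) auto
  also have "card (FM ` {..<n}) = n"
    by (subst card_image) (auto simp: inj_on_def)
  finally show ?thesis by simp
qed

text \<open>The index of the frame vector dual to a given one: \<open>g(\<ell>, n) = 1\<close>, \<open>g(m\<^sub>i, m\<^sub>i) = 1\<close>.\<close>

fun dual_idx :: "fidx \<Rightarrow> fidx" where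
  "dual_idx FL = FN" | "dual_idx FN = FL" | "dual_idx (FM i) = FM i"

lemma dual_idx_dual_idx [simp]: "dual_idx (dual_idx A) = A"
  by (cases A) auto

lemma bw_dual_idx [simp]: "bw (dual_idx A) = - bw A"
  by (cases A) auto

lemma dual_idx_mem_fidx_set [simp]: "dual_idx A \<in> fidx_set n \<longleftrightarrow> A \<in> fidx_set n"
  by (cases A) auto

lemma sum_dual_idx: "(\<Sum>A\<in>fidx_set n. f (dual_idx A)) = (\<Sum>A\<in>fidx_set n. f A)"
  by (rule sum.reindex_bij_witness[where i=dual_idx and j=dual_idx]) auto

section \<open>Nilpotent self-adjoint and antisymmetric operators\<close>

lemma funpow_closed: "(\<And>x. x \<in> S \<Longrightarrow> f x \<in> S) \<Longrightarrow> x \<in> S \<Longrightarrow> (f ^^ k) x \<in> S"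
  by (induction k) auto

lemma selfadjoint_nilpotent_eq_zero:
  fixes f :: "'v \<Rightarrow> 'v" and B :: "'v \<Rightarrow> 'v \<Rightarrow> real"
  assumes closed: "\<And>x. x \<in> S \<Longrightarrow> f x \<in> S"
    and adjoint: "\<And>x y. x \<in> S \<Longrightarrow> y \<in> S \<Longrightarrow> B x (f y) = B (f x) y"
    and B_zero: "\<And>x. x \<in> S \<Longrightarrow> B x z = 0"
    and anisotropic: "\<And>x. x \<in> S \<Longrightarrow> B x x = 0 \<Longrightarrow> x = z"
    and nilpotent: "\<And>x. x \<in> S \<Longrightarrow> (f ^^ k) x = z"
    and "x \<in> S"
  shows "f x = z"
  using nilpotent \<open>x \<in> S\<close>
proof (induction k arbitrary: x)
  case 0
  then show ?case using closed by (metis funpow_0)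
next
  case (Suc k)
  show ?case
  proof (cases k)
    case 0
    then show ?thesis using Suc.prems by simp
  next
    case (Suc k')
    have "(f ^^ k) y = z" if "y \<in> S" for y
    proof -
      define u where "u = (f ^^ k') y"
      have u: "u \<in> S" "f u \<in> S"
        using funpow_closed[of S f, OF closed that] closed u_def by auto
      have fu: "(f ^^ k) y = f u" using Suc u_def by simp
      \<comment> \<open>\<open>B(f u, f u) = B(u, f\<^sup>k\<^sup>+\<^sup>1 y) = 0\<close>\<close>
      have "B (f u) (f u) = B u (f (f u))" using adjoint u by simp
      also have "f (f u) = (f ^^ Suc k) y" using fu by simp
      also have "\<dots> = z" using Suc.prems that by blast
      finally show ?thesis using anisotropic u B_zero fu by simp
    qed
    then show ?thesis using Suc.IH Suc.prems by blast
  qed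
qed

definition matrix_op :: "nat \<Rightarrow> (nat \<Rightarrow> nat \<Rightarrow> real) \<Rightarrow> (nat \<Rightarrow> real) \<Rightarrow> nat \<Rightarrow> real" where
  "matrix_op n M x = (\<lambda>i. if i < n then (\<Sum>j<n. M i j * x j) else 0)"

lemma matrix_op_antisymmetric_adjoint:
  assumes anti: "\<And>i j. i < n \<Longrightarrow> j < n \<Longrightarrow> M i j = - M j i"
  shows "(\<Sum>i<n. x i * matrix_op n M y i) = - (\<Sum>i<n. matrix_op n M x i * y i)"
proof -
  have "(\<Sum>i<n. x i * matrix_op n M y i) = (\<Sum>i<n. \<Sum>j<n. M i j * x i * y j)"
    by (simp add: matrix_op_def sum_distrib_left mult_ac)
  also have "\<dots> = (\<Sum>j<n. \<Sum>i<n. M i j * x i * y j)"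
    by (rule sum.swap)
  also have "\<dots> = (\<Sum>j<n. \<Sum>i<n. - (M j i * x i * y j))"
    by (intro sum.cong refl) (subst anti, auto)
  also have "\<dots> = - (\<Sum>i<n. matrix_op n M x i * y i)"
    by (simp add: matrix_op_def sum_distrib_right sum_distrib_left sum_negf mult_ac)
  finally show ?thesis .
qed

lemma sum_squares_eq_0_imp:
  fixes x :: "nat \<Rightarrow> real"
  assumes "(\<Sum>i<n. x i * x i) = 0" "i < n"
  shows "x i = 0"
proof -
  have "\<forall>i\<in>{..<n}. x i * x i = 0"
    using assms(1) by (subst (asm) sum_nonneg_eq_0_iff) auto
  then show ?thesis using assms(2) by simp
qed

lemma antisymmetric_nilpotent_matrix_square_eq_0:
  assumes anti: "\<And>i j. i < n \<Longrightarrow> j < n \<Longrightarrow> M i j = - M j i"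
    and nil: "\<And>x i. i < n \<Longrightarrow> (matrix_op n M ^^ k) x i = 0"
    and x: "\<And>i. n \<le> i \<Longrightarrow> x i = 0"
  shows "matrix_op n M (matrix_op n M x) = (\<lambda>i. 0)"
proof -
  define S where "S = {x::nat\<Rightarrow>real. \<forall>i\<ge>n. x i = 0}"
  define B where "B = (\<lambda>x y::nat\<Rightarrow>real. \<Sum>i<n. x i * y i)"
  let ?M = "matrix_op n M"
  have closed: "?M x \<in> S" for x
    by (auto simp: S_def matrix_op_def)
  have nil_S: "(?M ^^ k) x = (\<lambda>i. 0)" if "x \<in> S" for x
  proof
    fix i
    show "(?M ^^ k) x i = 0"
      using funpow_closed[of S ?M, OF closed that] nil by (cases "i < n") (auto simp: S_def)
  qed
  have "?M \<circ> ?M = ?M ^^ 2" by (simp add: numeral_2_eq_2)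
  then have square_pow: "(?M \<circ> ?M) ^^ k = ?M ^^ k \<circ> ?M ^^ k"
    by (simp add: funpow_mult funpow_add[symmetric] mult_2)
  \<comment> \<open>\<open>M\<^sup>2\<close> is self-adjoint because M is antisymmetric.\<close>
  show ?thesis
  proof (rule selfadjoint_nilpotent_eq_zero[where f="?M \<circ> ?M" and B=B and S=S and k=k, simplified])
    show "B x (?M (?M y)) = B (?M (?M x)) y" for x y
      unfolding B_def by (simp add: matrix_op_antisymmetric_adjoint[OF anti])
    show "B x (\<lambda>i. 0) = 0" for x by (simp add: B_def)
    show "x = (\<lambda>i. 0)" if "x \<in> S" "B x x = 0" for x
    proof
      fix i
      show "x i = 0"
        using that sum_squares_eq_0_imp[of x n i] by (cases "i < n") (auto simp: S_def B_def)
    qed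
    show "((?M \<circ> ?M) ^^ k) x = (\<lambda>i. 0)" if "x \<in> S" for x
      using nil_S funpow_closed[of S ?M, OF closed that] by (simp add: square_pow)
  qed (use closed x S_def in auto)
qed

text \<open>With \<open>e\<^sub>j\<close> the j-th unit vector, \<open>|M e\<^sub>j|\<^sup>2 = - e\<^sub>j \<cdot> M\<^sup>2 e\<^sub>j = 0\<close>.\<close>

lemma antisymmetric_nilpotent_matrix_eq_0:
  assumes anti: "\<And>i j. i < n \<Longrightarrow> j < n \<Longrightarrow> M i j = - M j i"
    and nil: "\<And>x i. i < n \<Longrightarrow> (matrix_op n M ^^ k) x i = 0"
    and "i < n" "j < n"
  shows "M i j = 0"
proof -
  define e where "e = (\<lambda>l. if l = j then 1 else (0::real))"
  let ?Me = "matrix_op n M e"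
  have "(\<Sum>i<n. ?Me i * ?Me i) = - (\<Sum>i<n. e i * matrix_op n M ?Me i)"
    using matrix_op_antisymmetric_adjoint[where x=e and y="?Me", OF anti] by simp
  also have "\<dots> = 0"
    using antisymmetric_nilpotent_matrix_square_eq_0[OF anti nil, of e] assms(4) by (simp add: e_def)
  finally have "?Me i = 0"
    using sum_squares_eq_0_imp assms(3) by blast
  moreover have "?Me i = M i j"
    using assms(3,4) by (simp add: matrix_op_def e_def if_distrib cong: if_cong)
  ultimately show ?thesis by simp
qed

section \<open>Arrays of frame components graded by boost weight\<close>

type_synonym farr = "fidx \<Rightarrow> fidx \<Rightarrow> real"

definition pair_bw :: "fidx \<Rightarrow> fidx \<Rightarrow> int" where
  "pair_bw A B = bw A + bw B"

lemma pair_bw_dual_idx [simp]: "pair_bw (dual_idx A) (dual_idx B) = - pair_bw A B"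
  by (simp add: pair_bw_def)

text \<open>Arrays stand for
  the frame components \<open>Z\<^sup>A\<^sup>B\<close>; K carries the lowered indices \<open>A, B\<close> as their duals.\<close>

definition frame_op :: "nat \<Rightarrow> (fidx \<Rightarrow> fidx \<Rightarrow> fidx \<Rightarrow> fidx \<Rightarrow> real) \<Rightarrow> farr \<Rightarrow> farr" where
  "frame_op n K z = (\<lambda>A B. if A \<in> fidx_set n \<and> B \<in> fidx_set n then
      (\<Sum>C\<in>fidx_set n. \<Sum>D\<in>fidx_set n. K A B C D * z C D) else 0)"

definition bw_part :: "int \<Rightarrow> farr \<Rightarrow> farr" where
  "bw_part k z = (\<lambda>A B. if pair_bw A B = k then z A B else 0)"

definition bw_ge :: "int \<Rightarrow> farr \<Rightarrow> bool" where
  "bw_ge k z \<longleftrightarrow> (\<forall>A B. pair_bw A B < k \<longrightarrow> z A B = 0)"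

definition bw_filtered :: "nat \<Rightarrow> (fidx \<Rightarrow> fidx \<Rightarrow> fidx \<Rightarrow> fidx \<Rightarrow> real) \<Rightarrow> bool" where
  "bw_filtered n K \<longleftrightarrow> (\<forall>A B C D. A \<in> fidx_set n \<and> B \<in> fidx_set n \<and> C \<in> fidx_set n \<and>
      D \<in> fidx_set n \<and> pair_bw C D > pair_bw A B \<longrightarrow> K A B C D = 0)"

definition frame_supported :: "nat \<Rightarrow> farr \<Rightarrow> bool" where
  "frame_supported n z \<longleftrightarrow> (\<forall>A B. A \<notin> fidx_set n \<or> B \<notin> fidx_set n \<longrightarrow> z A B = 0)"

lemma frame_op_outside: "\<not> (A \<in> fidx_set n \<and> B \<in> fidx_set n) \<Longrightarrow> frame_op n K z A B = 0"
  unfolding frame_op_def by auto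

lemma bw_part_idem [simp]: "bw_part k (bw_part k z) = bw_part k z"
  by (simp add: bw_part_def fun_eq_iff)

lemma bw_ge_frame_op:
  assumes "bw_filtered n K" "bw_ge k z"
  shows "bw_ge k (frame_op n K z)"
  unfolding bw_ge_def
proof (intro allI impI)
  fix A B assume AB: "pair_bw A B < k"
  have "K A B C D * z C D = 0"
    if "A \<in> fidx_set n" "B \<in> fidx_set n" "C \<in> fidx_set n" "D \<in> fidx_set n" for C D
    using assms AB that unfolding bw_filtered_def bw_ge_def
    by (cases "pair_bw C D < k") auto
  then show "frame_op n K z A B = 0"
    unfolding frame_op_def by (auto intro!: sum.neutral)
qed

lemma bw_part_frame_op:
  assumes "bw_filtered n K" "bw_ge k z"
  shows "bw_part k (frame_op n K z) = bw_part k (frame_op n K (bw_part k z))"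
proof (intro ext)
  fix A B
  show "bw_part k (frame_op n K z) A B = bw_part k (frame_op n K (bw_part k z)) A B"
  proof (cases "pair_bw A B = k \<and> A \<in> fidx_set n \<and> B \<in> fidx_set n")
    case True
    have "K A B C D * z C D = K A B C D * bw_part k z C D"
      if "C \<in> fidx_set n" "D \<in> fidx_set n" for C D
      using assms True that unfolding bw_filtered_def bw_ge_def bw_part_def
      by (cases "pair_bw C D" k rule: linorder_cases) auto
    then have "(\<Sum>C\<in>fidx_set n. \<Sum>D\<in>fidx_set n. K A B C D * z C D) =
        (\<Sum>C\<in>fidx_set n. \<Sum>D\<in>fidx_set n. K A B C D * bw_part k z C D)"
      by (intro sum.cong refl) auto
    then show ?thesis
      using True by (simp add: bw_part_def frame_op_def)
  next
    case False
    then show ?thesis by (auto simp: bw_part_def frame_op_def)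
  qed
qed

lemma funpow_frame_op_bw_part:
  assumes "bw_filtered n K" "bw_ge k z"
  shows "bw_part k ((frame_op n K ^^ j) z) = ((bw_part k \<circ> frame_op n K) ^^ j) (bw_part k z)"
proof -
  have "bw_ge k ((frame_op n K ^^ j) z) \<and>
      bw_part k ((frame_op n K ^^ j) z) = ((bw_part k \<circ> frame_op n K) ^^ j) (bw_part k z)"
  proof (induction j)
    case 0
    then show ?case using assms by simp
  next
    case (Suc j)
    then show ?case
      using bw_ge_frame_op[OF assms(1)] bw_part_frame_op[OF assms(1)] by simp
  qed
  then show ?thesis ..
qed

lemma bw_ge_bw_part: "bw_ge k (bw_part k z)"
  by (simp add: bw_ge_def bw_part_def)

lemma bw_part_nilpotent:
  assumes "bw_filtered n K"
    and nil: "\<And>z. P z \<Longrightarrow> (frame_op n K ^^ j) z = (\<lambda>A B. 0)"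
    and "P w" "bw_part k w = w"
  shows "((bw_part k \<circ> frame_op n K) ^^ j) w = (\<lambda>A B. 0)"
proof -
  have "((bw_part k \<circ> frame_op n K) ^^ j) w = bw_part k ((frame_op n K ^^ j) w)"
    using funpow_frame_op_bw_part[OF assms(1), of k w] assms(4) bw_ge_bw_part[of k w] by simp
  also have "\<dots> = (\<lambda>A B. 0)"
    using nil assms(3) by (simp add: bw_part_def)
  finally show ?thesis .
qed

lemma sum_swap4:
  "(\<Sum>a\<in>X. \<Sum>b\<in>Y. \<Sum>c\<in>U. \<Sum>d\<in>V. h a b c d) = (\<Sum>c\<in>U. \<Sum>d\<in>V. \<Sum>a\<in>X. \<Sum>b\<in>Y. h a b c d)"
proof -
  have "(\<Sum>a\<in>X. \<Sum>b\<in>Y. \<Sum>c\<in>U. \<Sum>d\<in>V. h a b c d) = (\<Sum>a\<in>X. \<Sum>c\<in>U. \<Sum>b\<in>Y. \<Sum>d\<in>V. h a b c d)"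
    by (rule sum.cong[OF refl], rule sum.swap)
  also have "\<dots> = (\<Sum>c\<in>U. \<Sum>a\<in>X. \<Sum>b\<in>Y. \<Sum>d\<in>V. h a b c d)"
    by (rule sum.swap)
  also have "\<dots> = (\<Sum>c\<in>U. \<Sum>a\<in>X. \<Sum>d\<in>V. \<Sum>b\<in>Y. h a b c d)"
    by (rule sum.cong[OF refl], rule sum.cong[OF refl], rule sum.swap)
  also have "\<dots> = (\<Sum>c\<in>U. \<Sum>d\<in>V. \<Sum>a\<in>X. \<Sum>b\<in>Y. h a b c d)"
    by (rule sum.cong[OF refl], rule sum.swap)
  finally show ?thesis .
qed

definition frame_pairing :: "nat \<Rightarrow> farr \<Rightarrow> farr \<Rightarrow> real" where
  "frame_pairing n z w = (\<Sum>A\<in>fidx_set n. \<Sum>B\<in>fidx_set n. z A B * w (dual_idx A) (dual_idx B))"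

lemma frame_pairing_frame_op:
  assumes K: "\<And>A B C D. K (dual_idx A) (dual_idx B) C D = K (dual_idx C) (dual_idx D) A B"
  shows "frame_pairing n z (frame_op n K w) = frame_pairing n (frame_op n K z) w"
proof -
  let ?I = "fidx_set n"
  have "frame_pairing n z (frame_op n K w) =
      (\<Sum>A\<in>?I. \<Sum>B\<in>?I. \<Sum>C\<in>?I. \<Sum>D\<in>?I. z A B * K (dual_idx A) (dual_idx B) C D * w C D)"
    unfolding frame_pairing_def frame_op_def by (simp add: sum_distrib_left mult.assoc)
  also have "\<dots> = (\<Sum>C\<in>?I. \<Sum>D\<in>?I. \<Sum>A\<in>?I. \<Sum>B\<in>?I. K (dual_idx C) (dual_idx D) A B * z A B * w C D)"
    by (subst sum_swap4) (simp add: K mult.commute)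
  also have "\<dots> = (\<Sum>C\<in>?I. \<Sum>D\<in>?I. frame_op n K z (dual_idx C) (dual_idx D) * w C D)"
    by (simp add: frame_op_def sum_distrib_right)
  also have "\<dots> = (\<Sum>C\<in>?I. \<Sum>D\<in>?I. frame_op n K z C D * w (dual_idx C) (dual_idx D))"
    by (subst sum_dual_idx[symmetric], rule sum.cong[OF refl], subst sum_dual_idx[symmetric], simp)
  finally show ?thesis by (simp add: frame_pairing_def)
qed

lemma frame_pairing_bw_part: "frame_pairing n z (bw_part k w) = frame_pairing n (bw_part (-k) z) w"
  unfolding frame_pairing_def bw_part_def by (intro sum.cong refl) auto

lemma bw_part_eq_0:
  assumes "bw_part k z = z" "pair_bw A B \<noteq> k"
  shows "z A B = 0"
  using assms by (metis bw_part_def)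

lemma bw0_entries_eq_0:
  assumes "bw_part 0 z = z"
  shows "z FL FL = 0" "z FN FN = 0" "z FL (FM j) = 0" "z (FM j) FL = 0"
    "z FN (FM j) = 0" "z (FM j) FN = 0"
  using bw_part_eq_0[OF assms] by (simp_all add: pair_bw_def)

lemma frame_pairing_bw0_anisotropic:
  assumes supp: "frame_supported n z" and bw0: "bw_part 0 z = z"
    and sym: "z FN FL = z FL FN" and "frame_pairing n z z = 0"
  shows "z = (\<lambda>A B. 0)"
proof -
  note vanish = bw0_entries_eq_0[OF bw0]
  have outside: "z (FM i) (FM j) = 0" if "\<not> (i < n \<and> j < n)" for i j
    using supp that by (auto simp: frame_supported_def)
  have "frame_pairing n z z = 2 * (z FL FN)\<^sup>2 + (\<Sum>i<n. \<Sum>j<n. (z (FM i) (FM j))\<^sup>2)"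
    by (simp add: frame_pairing_def sum_fidx_set vanish sym power2_eq_square)
  moreover have "(\<Sum>i<n. \<Sum>j<n. (z (FM i) (FM j))\<^sup>2) \<ge> 0"
    by (intro sum_nonneg) auto
  ultimately have LN: "z FL FN = 0" and MM: "(\<Sum>i<n. \<Sum>j<n. (z (FM i) (FM j))\<^sup>2) = 0"
    using assms(4) by (smt (verit) zero_le_power2 power2_eq_square mult_eq_0_iff)+
  have "z (FM i) (FM j) = 0" for i j
  proof (cases "i < n \<and> j < n")
    case True
    then have "(\<Sum>j<n. (z (FM i) (FM j))\<^sup>2) = 0"
      using MM by (subst (asm) sum_nonneg_eq_0_iff) (auto intro!: sum_nonneg)
    then show ?thesis using True by (subst (asm) sum_nonneg_eq_0_iff) auto
  qed (rule outside)
  then show ?thesis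
    by (intro ext, case_tac A; case_tac B) (simp_all add: LN vanish sym)
qed

text \<open>The symmetry of K makes the projected operator self-adjoint for the frame pairing.\<close>

lemma bw0_part_frame_op_eq_0:
  assumes filt: "bw_filtered n K"
    and adj: "\<And>A B C D. K (dual_idx A) (dual_idx B) C D = K (dual_idx C) (dual_idx D) A B"
    and nil: "\<exists>k. \<forall>z. P z \<longrightarrow> (frame_op n K ^^ k) z = (\<lambda>A B. 0)"
    and S: "\<And>z. z \<in> S \<Longrightarrow> P z \<and> bw_part 0 z = z"
    and closed: "\<And>z. z \<in> S \<Longrightarrow> bw_part 0 (frame_op n K z) \<in> S"
    and anisotropic: "\<And>z. z \<in> S \<Longrightarrow> frame_pairing n z z = 0 \<Longrightarrow> z = (\<lambda>A B. 0)"
    and "z \<in> S"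
  shows "bw_part 0 (frame_op n K z) = (\<lambda>A B. 0)"
proof -
  obtain k where k: "\<And>z. P z \<Longrightarrow> (frame_op n K ^^ k) z = (\<lambda>A B. 0)"
    using nil by blast
  let ?f = "bw_part 0 \<circ> frame_op n K"
  have "?f z = (\<lambda>A B. 0)"
  proof (rule selfadjoint_nilpotent_eq_zero[where f="?f" and B="frame_pairing n" and S=S and k=k
      and z="\<lambda>A B. 0" and x=z])
    show "?f x \<in> S" if "x \<in> S" for x using closed that by simp
    show "frame_pairing n x (?f y) = frame_pairing n (?f x) y" if "x \<in> S" "y \<in> S" for x y
    proof -
      have x: "bw_part 0 x = x" and y: "bw_part 0 y = y" using S that by auto
      have "frame_pairing n x (?f y) = frame_pairing n x (frame_op n K y)"
        using frame_pairing_bw_part[of n x 0] x by simp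
      also have "\<dots> = frame_pairing n (frame_op n K x) y"
        by (rule frame_pairing_frame_op) (rule adj)
      also have "\<dots> = frame_pairing n (?f x) y"
        using frame_pairing_bw_part[of n "frame_op n K x" 0 y] y by simp
      finally show ?thesis .
    qed
    show "frame_pairing n x (\<lambda>A B. 0) = 0" for x by (simp add: frame_pairing_def)
    show "(?f ^^ k) x = (\<lambda>A B. 0)" if "x \<in> S" for x
      using S[OF that] by (intro bw_part_nilpotent[where P=P, OF filt k]) auto
  qed (use anisotropic \<open>z \<in> S\<close> in auto)
  then show ?thesis by simp
qed

text \<open>\<open>s = 1\<close> gives symmetric and \<open>s = -1\<close> antisymmetric arrays.\<close>

definition bw1_array :: "nat \<Rightarrow> real \<Rightarrow> (nat \<Rightarrow> real) \<Rightarrow> farr" where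
  "bw1_array n s x = (\<lambda>A B. case A of
      FL \<Rightarrow> (case B of FM j \<Rightarrow> if j < n then x j else 0 | _ \<Rightarrow> 0)
    | FM i \<Rightarrow> (case B of FL \<Rightarrow> if i < n then s * x i else 0 | _ \<Rightarrow> 0)
    | FN \<Rightarrow> 0)"

lemma bw1_array_simps [simp]:
  "bw1_array n s x FL (FM j) = (if j < n then x j else 0)"
  "bw1_array n s x (FM i) FL = (if i < n then s * x i else 0)"
  "bw1_array n s x FL FL = 0" "bw1_array n s x FL FN = 0" "bw1_array n s x FN B = 0"
  "bw1_array n s x (FM i) FN = 0" "bw1_array n s x (FM i) (FM j) = 0"
  by (simp_all add: bw1_array_def)

lemma bw_part_bw1_array: "bw_part 1 (bw1_array n s x) = bw1_array n s x"
  by (auto simp: fun_eq_iff bw_part_def pair_bw_def bw1_array_def split: fidx.splits)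

lemma frame_supported_bw1_array: "frame_supported n (bw1_array n s x)"
  by (auto simp: frame_supported_def bw1_array_def split: fidx.splits)

lemma bw1_array_sym: "bw1_array n 1 x A B = bw1_array n 1 x B A"
  by (cases A; cases B) auto

lemma bw1_array_antisym: "bw1_array n (-1) x A B = - bw1_array n (-1) x B A"
  by (cases A; cases B) auto

lemma bw1_antisymmetric_matrix_eq_0:
  assumes filt: "bw_filtered n K"
    and nil: "\<exists>k. \<forall>z. P z \<longrightarrow> (frame_op n K ^^ k) z = (\<lambda>A B. 0)"
    and P: "\<And>x. P (bw1_array n s x)"
    and restrict: "\<And>x. bw_part 1 (frame_op n K (bw1_array n s x)) = bw1_array n s (matrix_op n M x)"
    and anti: "\<And>i j. i < n \<Longrightarrow> j < n \<Longrightarrow> M i j = - M j i"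
    and "i < n" "j < n"
  shows "M i j = 0"
proof -
  obtain k where k: "\<And>z. P z \<Longrightarrow> (frame_op n K ^^ k) z = (\<lambda>A B. 0)"
    using nil by blast
  have "(matrix_op n M ^^ k) x i = 0" if "i < n" for x i
  proof -
    have "((bw_part 1 \<circ> frame_op n K) ^^ k) (bw1_array n s x) = bw1_array n s ((matrix_op n M ^^ k) x)"
      by (induction k) (simp_all add: restrict)
    moreover have "((bw_part 1 \<circ> frame_op n K) ^^ k) (bw1_array n s x) = (\<lambda>A B. 0)"
      by (intro bw_part_nilpotent[where P=P, OF filt k]) (simp_all add: P bw_part_bw1_array)
    ultimately have "bw1_array n s ((matrix_op n M ^^ k) x) = (\<lambda>A B. 0)"
      by metis
    then have "bw1_array n s ((matrix_op n M ^^ k) x) FL (FM i) = 0"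
      by simp
    then show ?thesis using that by simp
  qed
  then show ?thesis
    using antisymmetric_nilpotent_matrix_eq_0[where M=M and k=k, OF anti] assms(6,7) by blast
qed

section \<open>Vanishing of the boost-weight-0 components\<close>

definition sym_bw0 :: "nat \<Rightarrow> farr set" where
  "sym_bw0 n = {z. (\<forall>A B. z A B = z B A) \<and> frame_supported n z \<and> bw_part 0 z = z}"

text \<open>On bivectors of boost weight 0 the frame pairing is indefinite in the \<open>\<ell>\<and>n\<close> direction,
  which is therefore excluded.\<close>

definition biv_bw0 :: "nat \<Rightarrow> farr set" where
  "biv_bw0 n = {z. (\<forall>A B. z A B = - z B A) \<and> frame_supported n z \<and> bw_part 0 z = z \<and> z FL FN = 0}"

lemma biv_bw0D:
  assumes "z \<in> biv_bw0 n"
  shows "z A B = - z B A" "frame_supported n z" "bw_part 0 z = z" "z FL FN = 0"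
  using assms unfolding biv_bw0_def by blast+

definition unit_array :: "fidx \<Rightarrow> fidx \<Rightarrow> farr" where
  "unit_array P Q = (\<lambda>A B. if A = P \<and> B = Q then 1 else 0)"

lemma unit_array_swap: "unit_array P Q B A = unit_array Q P A B"
  by (simp add: unit_array_def conj_commute)

lemma frame_op_unit_array:
  assumes "P \<in> fidx_set n" "Q \<in> fidx_set n" "A \<in> fidx_set n" "B \<in> fidx_set n"
  shows "frame_op n K (unit_array P Q) A B = K A B P Q"
proof -
  have "(\<Sum>C\<in>fidx_set n. \<Sum>D\<in>fidx_set n. K A B C D * unit_array P Q C D) =
      (\<Sum>C\<in>fidx_set n. if C = P then K A B C Q else 0)"
    using assms by (intro sum.cong refl) (simp add: unit_array_def if_distrib cong: if_cong)
  then show ?thesis using assms by (simp add: frame_op_def)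
qed

lemma frame_op_diff:
  "frame_op n K (\<lambda>A B. z A B - w A B) = (\<lambda>A B. frame_op n K z A B - frame_op n K w A B)"
  by (simp add: frame_op_def fun_eq_iff right_diff_distrib sum_subtractf)

text \<open>\<open>Tf A B C D = T(e\<^sub>A, e\<^sub>B, e\<^sub>C, e\<^sub>D)\<close>; in the frame, \<open>\<T>\<^sup>s\<close> and \<open>\<T>\<close> become
  \<open>frame_op n sym_kernel\<close> and \<open>frame_op n biv_kernel\<close>.\<close>

locale typeII_frame_tensor =
  fixes n :: nat and Tf :: "fidx \<Rightarrow> fidx \<Rightarrow> fidx \<Rightarrow> fidx \<Rightarrow> real"
  assumes antisym: "\<And>A B C D. Tf A B C D = - Tf B A C D"
    and pairsym: "\<And>A B C D. Tf A B C D = Tf C D A B"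
    and bw_pos_eq_0: "\<And>A B C D. A \<in> fidx_set n \<Longrightarrow> B \<in> fidx_set n \<Longrightarrow> C \<in> fidx_set n \<Longrightarrow>
        D \<in> fidx_set n \<Longrightarrow> bw A + bw B + bw C + bw D > 0 \<Longrightarrow> Tf A B C D = 0"
    and sym_nilpotent: "\<exists>k. \<forall>z. (\<forall>A B. z A B = z B A) \<and> frame_supported n z \<longrightarrow>
        (frame_op n (\<lambda>A B C D. Tf (dual_idx A) C (dual_idx B) D) ^^ k) z = (\<lambda>A B. 0)"
    and biv_nilpotent: "\<exists>k. \<forall>z. (\<forall>A B. z A B = - z B A) \<and> frame_supported n z \<longrightarrow>
        (frame_op n (\<lambda>A B C D. (1/2) * Tf (dual_idx A) (dual_idx B) C D) ^^ k) z = (\<lambda>A B. 0)"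
begin

abbreviation "sym_kernel \<equiv> \<lambda>A B C D. Tf (dual_idx A) C (dual_idx B) D"
abbreviation "biv_kernel \<equiv> \<lambda>A B C D. (1/2) * Tf (dual_idx A) (dual_idx B) C D"

lemma antisym2: "Tf A B C D = - Tf A B D C"
  by (simp only: pairsym[of A B C D] antisym[of C D A B] pairsym[of D C A B])

lemma Tf_diag [simp]: "Tf A A C D = 0" "Tf A B C C = 0"
  using antisym[of A A C D] antisym2[of A B C C] by simp_all

lemma bw_filtered_sym_kernel: "bw_filtered n sym_kernel"
  unfolding bw_filtered_def pair_bw_def by (auto intro!: bw_pos_eq_0)

lemma bw_filtered_biv_kernel: "bw_filtered n biv_kernel"
  unfolding bw_filtered_def pair_bw_def by (auto intro!: bw_pos_eq_0)

lemma sym_kernel_adjoint: "sym_kernel (dual_idx A) (dual_idx B) C D = sym_kernel (dual_idx C) (dual_idx D) A B"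
  by (simp only: dual_idx_dual_idx antisym[of A C B D] antisym2[of C A B D] minus_minus)

lemma biv_kernel_adjoint: "biv_kernel (dual_idx A) (dual_idx B) C D = biv_kernel (dual_idx C) (dual_idx D) A B"
  by (simp add: pairsym)

lemma frame_op_sym_kernel_sym:
  assumes "\<forall>A B. z A B = z B A"
  shows "frame_op n sym_kernel z B A = frame_op n sym_kernel z A B"
proof -
  have "(\<Sum>C\<in>fidx_set n. \<Sum>D\<in>fidx_set n. sym_kernel B A C D * z C D)
      = (\<Sum>D\<in>fidx_set n. \<Sum>C\<in>fidx_set n. sym_kernel B A C D * z C D)"
    by (rule sum.swap)
  also have "\<dots> = (\<Sum>D\<in>fidx_set n. \<Sum>C\<in>fidx_set n. sym_kernel A B D C * z D C)"
    by (intro sum.cong refl) (subst pairsym, simp add: assms)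
  finally show ?thesis unfolding frame_op_def by auto
qed

lemma frame_op_biv_kernel_antisym: "frame_op n biv_kernel z B A = - frame_op n biv_kernel z A B"
proof -
  have "(\<Sum>C\<in>fidx_set n. \<Sum>D\<in>fidx_set n. biv_kernel B A C D * z C D) =
      - (\<Sum>C\<in>fidx_set n. \<Sum>D\<in>fidx_set n. biv_kernel A B C D * z C D)"
    by (simp add: sum_negf[symmetric]) (intro sum.cong refl, subst antisym, simp)
  then show ?thesis unfolding frame_op_def by auto
qed

lemma bw0_sym_kernel_vanishes:
  assumes "z \<in> sym_bw0 n"
  shows "bw_part 0 (frame_op n sym_kernel z) = (\<lambda>A B. 0)"
proof (rule bw0_part_frame_op_eq_0[OF bw_filtered_sym_kernel _ sym_nilpotent])
  show "sym_kernel (dual_idx A) (dual_idx B) C D = sym_kernel (dual_idx C) (dual_idx D) A B" for A B C D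
    by (rule sym_kernel_adjoint)
  show "bw_part 0 (frame_op n sym_kernel z) \<in> sym_bw0 n" if "z \<in> sym_bw0 n" for z
    using that frame_op_sym_kernel_sym[of z] unfolding sym_bw0_def
    by (auto simp: bw_part_def pair_bw_def add.commute fun_eq_iff frame_supported_def
        frame_op_outside)
  show "frame_pairing n z z = 0 \<Longrightarrow> z = (\<lambda>A B. 0)" if "z \<in> sym_bw0 n" for z
    using that frame_pairing_bw0_anisotropic unfolding sym_bw0_def by blast
qed (use assms in \<open>auto simp: sym_bw0_def\<close>)

text \<open>Apply the boost-weight-0 operator to the symmetric tensor \<open>\<ell> \<otimes> n + n \<otimes> \<ell>\<close>.\<close>

lemma sym_kernel_ln_components:
  shows T0101_eq_0: "Tf FL FN FL FN = 0"
    and Ti0j1_add_Ti1j0: "i < n \<Longrightarrow> j < n \<Longrightarrow> Tf (FM i) FL (FM j) FN + Tf (FM i) FN (FM j) FL = 0"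
proof -
  define e :: farr where "e = (\<lambda>A B. if A = FL \<and> B = FN \<or> A = FN \<and> B = FL then 1 else 0)"
  have "e \<in> sym_bw0 n"
    unfolding sym_bw0_def frame_supported_def e_def bw_part_def by (auto simp: pair_bw_def fun_eq_iff)
  then have vanish: "bw_part 0 (frame_op n sym_kernel e) A B = 0" for A B
    using bw0_sym_kernel_vanishes by simp
  show "Tf FL FN FL FN = 0"
    using vanish[of FL FN] antisym[of FN FL FL FN]
    by (simp add: bw_part_def pair_bw_def frame_op_def sum_fidx_set e_def)
  show "Tf (FM i) FL (FM j) FN + Tf (FM i) FN (FM j) FL = 0" if "i < n" "j < n"
    using vanish[of "FM i" "FM j"] that
    by (simp add: bw_part_def pair_bw_def frame_op_def sum_fidx_set e_def)
qed

lemma frame_op_biv_kernel_bw1_array: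
  "bw_part 1 (frame_op n biv_kernel (bw1_array n (-1) x)) =
    bw1_array n (-1) (matrix_op n (\<lambda>i j. Tf FN (FM i) FL (FM j)) x)"
proof -
  have entry: "frame_op n biv_kernel (bw1_array n (-1) x) FL (FM i) =
      matrix_op n (\<lambda>i j. Tf FN (FM i) FL (FM j)) x i" if "i < n" for i
    using that antisym2[of _ _ "FM _" FL]
    by (simp add: frame_op_def sum_fidx_set matrix_op_def sum_divide_distrib[symmetric] sum_negf)
  show ?thesis
  proof (intro ext)
    fix A B
    show "bw_part 1 (frame_op n biv_kernel (bw1_array n (-1) x)) A B =
      bw1_array n (-1) (matrix_op n (\<lambda>i j. Tf FN (FM i) FL (FM j)) x) A B"
    proof (cases A)
      case (FM i)
      then show ?thesis
        using entry frame_op_biv_kernel_antisym[of _ "FM i" FL]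
        by (cases B) (auto simp: bw_part_def pair_bw_def frame_op_outside matrix_op_def)
    next
      case FL
      then show ?thesis
        using entry by (cases B) (auto simp: bw_part_def pair_bw_def frame_op_outside matrix_op_def)
    next
      case FN
      then show ?thesis by (cases B) (auto simp: bw_part_def pair_bw_def)
    qed
  qed
qed

lemma frame_op_sym_kernel_bw1_array:
  "bw_part 1 (frame_op n sym_kernel (bw1_array n 1 x)) =
    bw1_array n 1 (matrix_op n (\<lambda>i j. Tf FN FL (FM i) (FM j) + Tf FN (FM j) (FM i) FL) x)"
proof -
  have entry: "frame_op n sym_kernel (bw1_array n 1 x) FL (FM i) =
      matrix_op n (\<lambda>i j. Tf FN FL (FM i) (FM j) + Tf FN (FM j) (FM i) FL) x i" if "i < n" for i
    using that by (simp add: frame_op_def sum_fidx_set matrix_op_def sum.distrib algebra_simps)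
  have sym: "\<forall>A B. bw1_array n 1 x A B = bw1_array n 1 x B A"
    using bw1_array_sym by blast
  show ?thesis
  proof (intro ext)
    fix A B
    show "bw_part 1 (frame_op n sym_kernel (bw1_array n 1 x)) A B =
      bw1_array n 1 (matrix_op n (\<lambda>i j. Tf FN FL (FM i) (FM j) + Tf FN (FM j) (FM i) FL) x) A B"
    proof (cases A)
      case (FM i)
      then show ?thesis
        using entry frame_op_sym_kernel_sym[OF sym, of "FM i" FL] bw1_array_sym
        by (cases B) (auto simp: bw_part_def pair_bw_def frame_op_outside matrix_op_def)
    next
      case FL
      then show ?thesis
        using entry by (cases B) (auto simp: bw_part_def pair_bw_def frame_op_outside matrix_op_def)
    next
      case FN
      then show ?thesis by (cases B) (auto simp: bw_part_def pair_bw_def)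
    qed
  qed
qed

text \<open>On antisymmetric arrays \<open>\<ell> \<and> x\<close> the weight-1 part of \<open>\<T>\<close> is the matrix \<open>T\<^sub>1\<^sub>i\<^sub>0\<^sub>j\<close>,
  which is antisymmetric by \<open>Ti0j1_add_Ti1j0\<close>.\<close>

lemma T0i1j_eq_0:
  assumes "i < n" "j < n"
  shows "Tf FL (FM i) FN (FM j) = 0"
proof -
  let ?M = "\<lambda>i j. Tf FN (FM i) FL (FM j)"
  have swap: "?M i j = Tf (FM j) FL (FM i) FN" for i j
    by (simp only: pairsym[of FN "FM i" FL "FM j"] antisym[of FL "FM j" FN "FM i"]
        antisym2[of "FM j" FL FN "FM i"] minus_minus)
  have "?M i j = - ?M j i" if "i < n" "j < n" for i j
    using Ti0j1_add_Ti1j0[OF that(2,1)] swap[of i j] swap[of j i] pairsym[of "FM j" FN "FM i" FL]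
    by simp
  then have "?M j i = 0"
    using assms bw1_antisymmetric_matrix_eq_0[OF bw_filtered_biv_kernel biv_nilpotent _ frame_op_biv_kernel_bw1_array]
      bw1_array_antisym frame_supported_bw1_array by blast
  then show ?thesis by (simp add: pairsym[of FN "FM j" FL "FM i"])
qed

text \<open>On symmetric arrays \<open>\<ell> \<otimes> x + x \<otimes> \<ell>\<close> the weight-1 part of \<open>\<T>\<^sup>s\<close> is the matrix
  \<open>T\<^sub>1\<^sub>0\<^sub>i\<^sub>j + T\<^sub>1\<^sub>j\<^sub>i\<^sub>0\<close>; its second term vanishes by \<open>T0i1j_eq_0\<close>, leaving an antisymmetric matrix.\<close>

lemma T01ij_eq_0:
  assumes "i < n" "j < n"
  shows "Tf FL FN (FM i) (FM j) = 0"
proof -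
  let ?M = "\<lambda>i j. Tf FN FL (FM i) (FM j) + Tf FN (FM j) (FM i) FL"
  have M: "?M i j = Tf FN FL (FM i) (FM j)" if "i < n" "j < n" for i j
  proof -
    have "Tf FN (FM j) (FM i) FL = - Tf FL (FM i) FN (FM j)"
      by (simp only: pairsym[of FN "FM j" "FM i" FL] antisym[of "FM i" FL FN "FM j"])
    then show ?thesis using T0i1j_eq_0[OF that] by simp
  qed
  have "?M i j = - ?M j i" if "i < n" "j < n" for i j
    using M[OF that] M[OF that(2,1)] antisym2[of FN FL "FM i" "FM j"] by linarith
  then have "?M i j = 0"
    using assms bw1_antisymmetric_matrix_eq_0[OF bw_filtered_sym_kernel sym_nilpotent _ frame_op_sym_kernel_bw1_array]
      bw1_array_sym frame_supported_bw1_array by blast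
  then show ?thesis
    using M[OF assms] antisym[of FN FL "FM i" "FM j"] by simp
qed

text \<open>The \<open>\<ell>\<and>n\<close> component of the image is \<open>\<Sum> T\<^sub>1\<^sub>0\<^sub>i\<^sub>j z\<^sup>i\<^sup>j / 2\<close>, which vanishes by
  \<open>T01ij_eq_0\<close>.\<close>

lemma biv_bw0_closed:
  assumes z: "z \<in> biv_bw0 n"
  shows "bw_part 0 (frame_op n biv_kernel z) \<in> biv_bw0 n"
proof -
  note vanish = bw0_entries_eq_0[OF biv_bw0D(3)[OF z]]
  have "z FN FL = 0" "z FL FN = 0"
    using biv_bw0D(1)[OF z, of FN FL] biv_bw0D(4)[OF z] by simp_all
  then have "frame_op n biv_kernel z FL FN = (\<Sum>i<n. \<Sum>j<n. Tf FN FL (FM i) (FM j) * z (FM i) (FM j) / 2)"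
    by (simp add: frame_op_def sum_fidx_set vanish)
  also have "\<dots> = 0"
    using T01ij_eq_0 antisym[of FN FL] by simp
  finally have LN: "frame_op n biv_kernel z FL FN = 0" .
  show ?thesis
    unfolding biv_bw0_def mem_Collect_eq
  proof (intro conjI allI)
    show "bw_part 0 (frame_op n biv_kernel z) A B = - bw_part 0 (frame_op n biv_kernel z) B A" for A B
      using frame_op_biv_kernel_antisym[of z A B] by (simp add: bw_part_def pair_bw_def add.commute)
    show "frame_supported n (bw_part 0 (frame_op n biv_kernel z))"
      by (simp add: frame_supported_def bw_part_def frame_op_outside)
    show "bw_part 0 (frame_op n biv_kernel z) FL FN = 0"
      using LN by (simp add: bw_part_def pair_bw_def)
  qed simp
qed

lemma bw0_biv_kernel_vanishes:
  assumes "z \<in> biv_bw0 n"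
  shows "bw_part 0 (frame_op n biv_kernel z) = (\<lambda>A B. 0)"
proof (rule bw0_part_frame_op_eq_0[OF bw_filtered_biv_kernel _ biv_nilpotent _ biv_bw0_closed])
  show "biv_kernel (dual_idx A) (dual_idx B) C D = biv_kernel (dual_idx C) (dual_idx D) A B" for A B C D
    by (rule biv_kernel_adjoint)
  show "z = (\<lambda>A B. 0)" if "z \<in> biv_bw0 n" "frame_pairing n z z = 0" for z
  proof (rule frame_pairing_bw0_anisotropic[OF biv_bw0D(2,3)[OF that(1)] _ that(2)])
    show "z FN FL = z FL FN"
      using biv_bw0D(1)[OF that(1), of FN FL] biv_bw0D(4)[OF that(1)] by simp
  qed
  show "((\<forall>A B. z A B = - z B A) \<and> frame_supported n z) \<and> bw_part 0 z = z" if "z \<in> biv_bw0 n" for z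
    using biv_bw0D[OF that] by blast
qed (use assms in blast)+

text \<open>Apply the boost-weight-0 bivector operator to \<open>m\<^sub>k \<and> m\<^sub>l\<close>.\<close>

lemma Tijkl_eq_0:
  assumes "i < n" "j < n" "k < n" "l < n"
  shows "Tf (FM i) (FM j) (FM k) (FM l) = 0"
proof -
  define e where "e = (\<lambda>A B. unit_array (FM k) (FM l) A B - unit_array (FM l) (FM k) A B)"
  have "e \<in> biv_bw0 n"
    unfolding biv_bw0_def mem_Collect_eq
  proof (intro conjI allI)
    show "e A B = - e B A" for A B
      by (simp add: e_def unit_array_swap)
    show "frame_supported n e"
      using assms by (auto simp: frame_supported_def e_def unit_array_def)
    show "bw_part 0 e = e"
      unfolding bw_part_def by (intro ext) (auto simp: pair_bw_def e_def unit_array_def)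
  qed (simp add: e_def unit_array_def)
  then have "bw_part 0 (frame_op n biv_kernel e) (FM i) (FM j) = 0"
    using bw0_biv_kernel_vanishes by simp
  then have "biv_kernel (FM i) (FM j) (FM k) (FM l) - biv_kernel (FM i) (FM j) (FM l) (FM k) = 0"
    using assms by (simp add: e_def frame_op_diff frame_op_unit_array bw_part_def pair_bw_def)
  then show ?thesis
    using antisym2[of "FM i" "FM j" "FM k" "FM l"] by simp
qed

text \<open>Up to the symmetries every boost-weight-0 component is one of \<open>T\<^sub>0\<^sub>1\<^sub>0\<^sub>1\<close>, \<open>T\<^sub>0\<^sub>i\<^sub>1\<^sub>j\<close>,
  \<open>T\<^sub>0\<^sub>1\<^sub>i\<^sub>j\<close>, \<open>T\<^sub>i\<^sub>j\<^sub>k\<^sub>l\<close>.\<close>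

lemma bw0_eq_0:
  assumes "A \<in> fidx_set n" "B \<in> fidx_set n" "C \<in> fidx_set n" "D \<in> fidx_set n"
    and "bw A + bw B + bw C + bw D = 0"
  shows "Tf A B C D = 0"
proof -
  note flip = antisym[of FN FL] antisym2[of _ _ FN FL] antisym[of "FM _" FL] antisym[of "FM _" FN]
    antisym2[of _ _ "FM _" FL] antisym2[of _ _ "FM _" FN]
    pairsym[of FN "FM _" FL "FM _"] pairsym[of "FM _" "FM _" FL FN]
  show ?thesis
    using assms
    by (cases A; cases B; cases C; cases D)
      (auto simp: flip T0101_eq_0 T0i1j_eq_0 T01ij_eq_0 Tijkl_eq_0)
qed

lemma bw_nonneg_eq_0:
  assumes "A \<in> fidx_set n" "B \<in> fidx_set n" "C \<in> fidx_set n" "D \<in> fidx_set n"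
    and "bw A + bw B + bw C + bw D \<in> {0, 1, 2}"
  shows "Tf A B C D = 0"
  using assms bw0_eq_0 bw_pos_eq_0 by fastforce

end

section \<open>Frame coordinates of contravariant 2-tensors\<close>

definition lower :: "('d::finite \<Rightarrow> 'd \<Rightarrow> real) \<Rightarrow> real^'d \<Rightarrow> real^'d" where
  "lower g v = (\<chi> c. \<Sum>a\<in>UNIV. g a c * v $ a)"

lemma gform_eq_inner_lower: "gform g u v = lower g u \<bullet> v"
proof -
  have "gform g u v = (\<Sum>b\<in>UNIV. \<Sum>a\<in>UNIV. g a b * u$a * v$b)"
    unfolding gform_def by (rule sum.swap)
  also have "\<dots> = lower g u \<bullet> v"
    by (simp add: inner_vec_def lower_def sum_distrib_right)
  finally show ?thesis .
qed

lemma gform_commute: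
  assumes "\<And>a b. g a b = g b a"
  shows "gform g u v = gform g v u"
proof -
  have "gform g u v = (\<Sum>b\<in>UNIV. \<Sum>a\<in>UNIV. g a b * u$a * v$b)"
    unfolding gform_def by (rule sum.swap)
  also have "\<dots> = gform g v u"
    unfolding gform_def by (simp add: assms mult_ac)
  finally show ?thesis .
qed

lemma gform_sum_scaleR: "gform g u (\<Sum>A\<in>S. f A *\<^sub>R w A) = (\<Sum>A\<in>S. f A * gform g u (w A))"
  by (simp add: gform_eq_inner_lower inner_sum_right)

lemma sum_mult_delta:
  fixes f :: "'a::finite \<Rightarrow> real"
  shows "(\<Sum>x\<in>UNIV. f x * (if x = e then 1 else 0)) = f e"
    and "(\<Sum>x\<in>UNIV. f x * (if e = x then 1 else 0)) = f e"
proof -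
  have "(\<Sum>x\<in>UNIV. f x * (if x = e then 1 else 0)) = (\<Sum>x\<in>UNIV. if x = e then f x else 0)"
    by (intro sum.cong) auto
  then show "(\<Sum>x\<in>UNIV. f x * (if x = e then 1 else 0)) = f e" by simp
  then show "(\<Sum>x\<in>UNIV. f x * (if e = x then 1 else 0)) = f e" by (simp add: eq_commute)
qed

lemma sum2_mult_sum2_swap:
  fixes K :: "'c \<Rightarrow> 'd \<Rightarrow> real"
  shows "(\<Sum>c\<in>U. \<Sum>d\<in>V. K c d * (\<Sum>k\<in>S. \<Sum>k'\<in>S'. h k k' * X k k' c d)) =
    (\<Sum>k\<in>S. \<Sum>k'\<in>S'. h k k' * (\<Sum>c\<in>U. \<Sum>d\<in>V. K c d * X k k' c d))"
proof -
  have "(\<Sum>c\<in>U. \<Sum>d\<in>V. K c d * (\<Sum>k\<in>S. \<Sum>k'\<in>S'. h k k' * X k k' c d)) =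
      (\<Sum>c\<in>U. \<Sum>d\<in>V. \<Sum>k\<in>S. \<Sum>k'\<in>S'. K c d * (h k k' * X k k' c d))"
    by (simp only: sum_distrib_left)
  also have "\<dots> = (\<Sum>k\<in>S. \<Sum>k'\<in>S'. \<Sum>c\<in>U. \<Sum>d\<in>V. K c d * (h k k' * X k k' c d))"
    by (rule sum_swap4)
  also have "\<dots> = (\<Sum>k\<in>S. \<Sum>k'\<in>S'. h k k' * (\<Sum>c\<in>U. \<Sum>d\<in>V. K c d * X k k' c d))"
    by (simp only: sum_distrib_left mult.left_commute)
  finally show ?thesis .
qed

lemma tform_swap12:
  assumes "\<And>a b c d. T a b c d = - T b a c d"
  shows "tform T v u w z = - tform T u v w z"
proof -
  have "tform T v u w z = (\<Sum>b\<in>UNIV. \<Sum>a\<in>UNIV. \<Sum>c\<in>UNIV. \<Sum>d\<in>UNIV. T a b c d * v$a * u$b * w$c * z$d)"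
    unfolding tform_def by (rule sum.swap)
  also have "\<dots> = (\<Sum>b\<in>UNIV. \<Sum>a\<in>UNIV. \<Sum>c\<in>UNIV. \<Sum>d\<in>UNIV. - (T b a c d * u$b * v$a * w$c * z$d))"
    by (intro sum.cong refl) (subst assms, simp)
  also have "\<dots> = - tform T u v w z"
    by (simp add: tform_def sum_negf)
  finally show ?thesis .
qed

lemma tform_swap_pairs:
  assumes "\<And>a b c d. T a b c d = T c d a b"
  shows "tform T w z u v = tform T u v w z"
proof -
  have "tform T w z u v = (\<Sum>c\<in>UNIV. \<Sum>d\<in>UNIV. \<Sum>a\<in>UNIV. \<Sum>b\<in>UNIV. T a b c d * w$a * z$b * u$c * v$d)"
    unfolding tform_def by (rule sum_swap4)
  also have "\<dots> = tform T u v w z"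
    unfolding tform_def by (intro sum.cong refl) (subst assms, simp add: mult_ac)
  finally show ?thesis .
qed

lemma Tsop_eq_contract:
  "Tsop g T Z = (\<lambda>a b. \<Sum>e\<in>UNIV. \<Sum>f\<in>UNIV. ginv g a e * ginv g b f *
    (\<Sum>c\<in>UNIV. \<Sum>d\<in>UNIV. (\<lambda>e f c d. T e c f d) e f c d * Z c d))"
  by (simp add: Tsop_def sum_distrib_left mult_ac)

lemma Top_eq_contract:
  "Top g T Z = (\<lambda>a b. (1/2) * (\<Sum>e\<in>UNIV. \<Sum>f\<in>UNIV. ginv g a e * ginv g b f *
    (\<Sum>c\<in>UNIV. \<Sum>d\<in>UNIV. T e f c d * Z c d)))"
  by (simp add: Top_def sum_distrib_left mult_ac)

lemma contract_Tsop_kernel_eq_tform: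
  "(\<Sum>e\<in>UNIV. \<Sum>f\<in>UNIV. u $ e * v $ f * (\<Sum>c\<in>UNIV. \<Sum>d\<in>UNIV. T e c f d * (x $ c * y $ d)))
    = tform T u x v y"
proof -
  have "(\<Sum>e\<in>UNIV. \<Sum>f\<in>UNIV. u $ e * v $ f * (\<Sum>c\<in>UNIV. \<Sum>d\<in>UNIV. T e c f d * (x $ c * y $ d)))
      = (\<Sum>e\<in>UNIV. \<Sum>f\<in>UNIV. \<Sum>c\<in>UNIV. \<Sum>d\<in>UNIV. T e c f d * u $ e * x $ c * v $ f * y $ d)"
    by (simp add: sum_distrib_left mult_ac)
  also have "\<dots> = tform T u x v y"
    unfolding tform_def by (rule sum.cong[OF refl], rule sum.swap)
  finally show ?thesis .
qed

lemma contract_Top_kernel_eq_tform: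
  "(\<Sum>e\<in>UNIV. \<Sum>f\<in>UNIV. u $ e * v $ f * (\<Sum>c\<in>UNIV. \<Sum>d\<in>UNIV. T e f c d * (x $ c * y $ d)))
    = tform T u v x y"
  by (simp add: tform_def sum_distrib_left mult_ac)

locale null_frame_basis =
  fixes g :: "'d::finite \<Rightarrow> 'd \<Rightarrow> real" and l nv :: "real^'d" and m :: "nat \<Rightarrow> real^'d"
    and n :: nat
  assumes n_eq: "n = CARD('d) - 2"
    and dim: "CARD('d) \<ge> 2"
    and g_sym: "\<And>a b. g a b = g b a"
    and frame: "null_frame g l nv m"
begin

abbreviation "E \<equiv> fvec l nv m"

lemma gform_frame_dual:
  assumes "A \<in> fidx_set n" "B \<in> fidx_set n"
  shows "gform g (E (dual_idx A)) (E B) = (if A = B then 1 else 0)"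
proof -
  have s: "gform g u v = gform g v u" for u v
    using gform_commute g_sym by blast
  show ?thesis
    using assms frame[unfolded null_frame_def, folded n_eq] s[of l nv] s[of l "m i" for i]
      s[of nv "m i" for i]
    by (cases A; cases B) auto
qed

lemma inj_on_frame: "inj_on E (fidx_set n)"
proof (rule inj_onI)
  fix A B assume A: "A \<in> fidx_set n" and B: "B \<in> fidx_set n" and "E A = E B"
  then have "gform g (E (dual_idx A)) (E B) = 1"
    using gform_frame_dual[OF A A] by simp
  then show "A = B" using gform_frame_dual[OF A B] by (simp split: if_splits)
qed

lemma span_frame: "span (E ` fidx_set n) = UNIV"
proof -
  have ind: "independent (E ` fidx_set n)"
    unfolding independent_explicit_module
  proof (intro allI impI)
    fix t u v
    assume t: "finite t" "t \<subseteq> E ` fidx_set n" and s: "(\<Sum>v\<in>t. u v *\<^sub>R v) = 0" and v: "v \<in> t"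
    obtain A where A: "A \<in> fidx_set n" "v = E A" using t v by blast
    have "0 = gform g (E (dual_idx A)) (\<Sum>w\<in>t. u w *\<^sub>R w)"
      using s by (simp add: gform_eq_inner_lower)
    also have "\<dots> = (\<Sum>w\<in>t. u w * gform g (E (dual_idx A)) w)"
      by (rule gform_sum_scaleR)
    also have "\<dots> = (\<Sum>w\<in>t. if w = v then u w else 0)"
    proof (intro sum.cong refl)
      fix w assume "w \<in> t"
      then obtain B where B: "B \<in> fidx_set n" "w = E B" using t by blast
      then have "(w = v) = (B = A)" using inj_on_frame A by (metis inj_on_eq_iff)
      then show "u w * gform g (E (dual_idx A)) w = (if w = v then u w else 0)"
        using gform_frame_dual[OF A(1) B(1)] B by auto
    qed
    also have "\<dots> = u v" using v t by simp
    finally show "u v = 0" by simp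
  qed
  have "card (E ` fidx_set n) = CARD('d)"
    using card_image[OF inj_on_frame] card_fidx_set[of n] dim n_eq by simp
  then show ?thesis
    using card_ge_dim_independent[OF _ ind, of UNIV] by auto
qed

lemma frame_expansion: "v = (\<Sum>A\<in>fidx_set n. gform g (E (dual_idx A)) v *\<^sub>R E A)"
proof -
  obtain c where "v = (\<Sum>x\<in>E ` fidx_set n. c x *\<^sub>R x)"
    using span_frame span_finite[of "E ` fidx_set n"] by auto
  then have v: "v = (\<Sum>A\<in>fidx_set n. c (E A) *\<^sub>R E A)"
    by (simp add: sum.reindex[OF inj_on_frame])
  have "gform g (E (dual_idx A)) v = c (E A)" if A: "A \<in> fidx_set n" for A
  proof -
    have "gform g (E (dual_idx A)) v = (\<Sum>B\<in>fidx_set n. c (E B) * gform g (E (dual_idx A)) (E B))"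
      by (subst v) (rule gform_sum_scaleR)
    also have "\<dots> = (\<Sum>B\<in>fidx_set n. if B = A then c (E B) else 0)"
      by (intro sum.cong refl) (auto simp: gform_frame_dual A)
    finally show ?thesis using A by simp
  qed
  then show ?thesis by (subst v) (simp cong: sum.cong)
qed

lemma invertible_metric_matrix: "invertible (\<chi> i j. g i j)"
proof -
  have "inj ((*v) (\<chi> i j. g i j))"
    unfolding vec.inj_iff_eq_0
  proof (intro allI impI)
    fix v :: "real^'d" assume "(\<chi> i j. g i j) *v v = 0"
    then have "lower g v = 0"
      by (simp add: lower_def matrix_vector_mult_def g_sym vec_eq_iff mult_ac)
    moreover have "gform g (E (dual_idx A)) v = gform g v (E (dual_idx A))" for A
      by (rule gform_commute) (rule g_sym)
    ultimately have "gform g (E (dual_idx A)) v = 0" for A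
      by (simp add: gform_eq_inner_lower)
    then show "v = 0" using frame_expansion[of v] by simp
  qed
  then show ?thesis
    using matrix_left_invertible_injective invertible_left_inverse by blast
qed

lemma metric_mult_ginv: "(\<Sum>b\<in>UNIV. g a b * ginv g b c) = (if a = c then 1 else 0)"
proof -
  let ?G = "(\<chi> i j. g i j) :: real^'d^'d"
  have "?G ** matrix_inv ?G = mat 1"
    using invertible_metric_matrix unfolding invertible_def matrix_inv_def by (rule someI2_ex) auto
  then have "(?G ** matrix_inv ?G) $ a $ c = mat 1 $ a $ c" by simp
  then show ?thesis by (simp add: matrix_matrix_mult_def mat_def ginv_def)
qed

lemma sum_ginv_lower: "(\<Sum>a\<in>UNIV. ginv g a e * lower g u $ a) = u $ e"
proof -
  have "(\<Sum>a\<in>UNIV. ginv g a e * lower g u $ a) = (\<Sum>a\<in>UNIV. \<Sum>a'\<in>UNIV. u $ a' * (g a' a * ginv g a e))"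
    by (simp add: lower_def sum_distrib_left mult_ac)
  also have "\<dots> = (\<Sum>a'\<in>UNIV. u $ a' * (\<Sum>a\<in>UNIV. g a' a * ginv g a e))"
    by (subst sum.swap) (simp add: sum_distrib_left)
  also have "\<dots> = u $ e"
    by (simp add: metric_mult_ginv sum_mult_delta)
  finally show ?thesis .
qed

lemma frame_completeness:
  "(\<Sum>A\<in>fidx_set n. E A $ c * lower g (E (dual_idx A)) $ c') = (if c = c' then 1 else 0)"
proof -
  have "axis c' (1::real) $ c = (\<Sum>A\<in>fidx_set n. gform g (E (dual_idx A)) (axis c' 1) *\<^sub>R E A) $ c"
    by (subst frame_expansion[of "axis c' 1"]) (rule refl)
  also have "\<dots> = (\<Sum>A\<in>fidx_set n. E A $ c * lower g (E (dual_idx A)) $ c')"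
    by (simp add: sum_component gform_eq_inner_lower inner_axis mult.commute)
  finally show ?thesis by (simp add: axis_def)
qed

definition frame_tensor :: "farr \<Rightarrow> 'd \<Rightarrow> 'd \<Rightarrow> real" where
  "frame_tensor z = (\<lambda>c d. \<Sum>C\<in>fidx_set n. \<Sum>D\<in>fidx_set n. z C D * (E C $ c * E D $ d))"

definition frame_coord :: "('d \<Rightarrow> 'd \<Rightarrow> real) \<Rightarrow> farr" where
  "frame_coord Z A B = (if A \<in> fidx_set n \<and> B \<in> fidx_set n then
     (\<Sum>c\<in>UNIV. \<Sum>d\<in>UNIV. Z c d * (lower g (E (dual_idx A)) $ c * lower g (E (dual_idx B)) $ d))
   else 0)"

lemma frame_tensor_frame_coord: "frame_tensor (frame_coord Z) = Z"
proof (intro ext)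
  fix c d
  let ?I = "fidx_set n" and ?L = "\<lambda>A. lower g (E (dual_idx A))"
  have "frame_tensor (frame_coord Z) c d = (\<Sum>C\<in>?I. \<Sum>D\<in>?I. (E C $ c * E D $ d) *
      (\<Sum>c'\<in>UNIV. \<Sum>d'\<in>UNIV. Z c' d' * (?L C $ c' * ?L D $ d')))"
    unfolding frame_tensor_def frame_coord_def by (intro sum.cong refl) (simp add: mult.commute)
  also have "\<dots> = (\<Sum>c'\<in>UNIV. \<Sum>d'\<in>UNIV. Z c' d' *
      ((\<Sum>C\<in>?I. E C $ c * ?L C $ c') * (\<Sum>D\<in>?I. E D $ d * ?L D $ d')))"
    by (subst sum2_mult_sum2_swap[symmetric]) (simp add: sum_product mult_ac)
  also have "\<dots> = (\<Sum>c'\<in>UNIV. \<Sum>d'\<in>UNIV. Z c' d' * ((if c = c' then 1 else 0) * (if d = d' then 1 else 0)))"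
    by (simp add: frame_completeness)
  also have "\<dots> = (\<Sum>c'\<in>UNIV. (\<Sum>d'\<in>UNIV. Z c' d' * (if d = d' then 1 else 0)) * (if c = c' then 1 else 0))"
    by (intro sum.cong refl) (simp add: sum_distrib_right mult_ac)
  also have "\<dots> = Z c d"
    by (simp only: sum_mult_delta)
  finally show "frame_tensor (frame_coord Z) c d = Z c d" .
qed

lemma frame_coord_frame_tensor:
  assumes "frame_supported n z"
  shows "frame_coord (frame_tensor z) = z"
proof (intro ext)
  fix A B
  let ?I = "fidx_set n" and ?L = "\<lambda>A. lower g (E (dual_idx A))"
  show "frame_coord (frame_tensor z) A B = z A B"
  proof (cases "A \<in> ?I \<and> B \<in> ?I")
    case True
    have "frame_coord (frame_tensor z) A B = (\<Sum>c\<in>UNIV. \<Sum>d\<in>UNIV. (?L A $ c * ?L B $ d) *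
        (\<Sum>C\<in>?I. \<Sum>D\<in>?I. z C D * (E C $ c * E D $ d)))"
      unfolding frame_coord_def frame_tensor_def using True by (simp add: mult.commute)
    also have "\<dots> = (\<Sum>C\<in>?I. \<Sum>D\<in>?I. z C D *
        ((\<Sum>c\<in>UNIV. ?L A $ c * E C $ c) * (\<Sum>d\<in>UNIV. ?L B $ d * E D $ d)))"
      by (subst sum2_mult_sum2_swap) (simp add: sum_product mult_ac)
    also have "\<dots> = (\<Sum>C\<in>?I. \<Sum>D\<in>?I. z C D *
        (gform g (E (dual_idx A)) (E C) * gform g (E (dual_idx B)) (E D)))"
      by (simp add: gform_eq_inner_lower inner_vec_def)
    also have "\<dots> = (\<Sum>C\<in>?I. \<Sum>D\<in>?I. if D = B then (if C = A then z C D else 0) else 0)"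
      using True by (intro sum.cong refl) (auto simp: gform_frame_dual)
    also have "\<dots> = z A B" using True by simp
    finally show ?thesis .
  next
    case False
    then show ?thesis using assms by (auto simp: frame_coord_def frame_supported_def)
  qed
qed

lemma contract_ginv_lower:
  "(\<Sum>a\<in>UNIV. \<Sum>b\<in>UNIV. (\<Sum>e\<in>UNIV. \<Sum>f\<in>UNIV. ginv g a e * ginv g b f * W e f) *
      (lower g u $ a * lower g v $ b)) = (\<Sum>e\<in>UNIV. \<Sum>f\<in>UNIV. u $ e * v $ f * W e f)"
proof -
  have "(\<Sum>a\<in>UNIV. \<Sum>b\<in>UNIV. (\<Sum>e\<in>UNIV. \<Sum>f\<in>UNIV. ginv g a e * ginv g b f * W e f) *
      (lower g u $ a * lower g v $ b)) = (\<Sum>a\<in>UNIV. \<Sum>b\<in>UNIV. (lower g u $ a * lower g v $ b) *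
      (\<Sum>e\<in>UNIV. \<Sum>f\<in>UNIV. W e f * (ginv g a e * ginv g b f)))"
    by (intro sum.cong refl) (simp add: mult_ac)
  also have "\<dots> = (\<Sum>e\<in>UNIV. \<Sum>f\<in>UNIV. W e f *
      ((\<Sum>a\<in>UNIV. ginv g a e * lower g u $ a) * (\<Sum>b\<in>UNIV. ginv g b f * lower g v $ b)))"
    by (subst sum2_mult_sum2_swap) (simp add: sum_product mult_ac)
  also have "\<dots> = (\<Sum>e\<in>UNIV. \<Sum>f\<in>UNIV. u $ e * v $ f * W e f)"
    by (simp add: sum_ginv_lower mult_ac)
  finally show ?thesis .
qed

text \<open>The frame coordinates of a tensor obtained by raising both indices of a contraction
  \<open>Q\<^sub>e\<^sub>f\<^sub>c\<^sub>d Z\<^sup>c\<^sup>d\<close> are the frame components of Q applied to those of Z.\<close>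

lemma frame_coord_contract:
  assumes "A \<in> fidx_set n" "B \<in> fidx_set n"
  shows "frame_coord (\<lambda>a b. \<Sum>e\<in>UNIV. \<Sum>f\<in>UNIV. ginv g a e * ginv g b f *
        (\<Sum>c\<in>UNIV. \<Sum>d\<in>UNIV. Q e f c d * Z c d)) A B
    = (\<Sum>C\<in>fidx_set n. \<Sum>D\<in>fidx_set n. frame_coord Z C D *
        (\<Sum>e\<in>UNIV. \<Sum>f\<in>UNIV. E (dual_idx A) $ e * E (dual_idx B) $ f *
          (\<Sum>c\<in>UNIV. \<Sum>d\<in>UNIV. Q e f c d * (E C $ c * E D $ d))))"
proof -
  define W where "W = (\<lambda>e f. \<Sum>c\<in>UNIV. \<Sum>d\<in>UNIV. Q e f c d * Z c d)"
  have W: "W e f = (\<Sum>C\<in>fidx_set n. \<Sum>D\<in>fidx_set n. frame_coord Z C D *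
      (\<Sum>c\<in>UNIV. \<Sum>d\<in>UNIV. Q e f c d * (E C $ c * E D $ d)))" for e f
    unfolding W_def
    by (subst (1) frame_tensor_frame_coord[symmetric], unfold frame_tensor_def) (rule sum2_mult_sum2_swap)
  have "frame_coord (\<lambda>a b. \<Sum>e\<in>UNIV. \<Sum>f\<in>UNIV. ginv g a e * ginv g b f * W e f) A B
      = (\<Sum>e\<in>UNIV. \<Sum>f\<in>UNIV. (E (dual_idx A) $ e * E (dual_idx B) $ f) * W e f)"
    using assms by (simp add: frame_coord_def contract_ginv_lower)
  also have "\<dots> = (\<Sum>C\<in>fidx_set n. \<Sum>D\<in>fidx_set n. frame_coord Z C D *
      (\<Sum>e\<in>UNIV. \<Sum>f\<in>UNIV. (E (dual_idx A) $ e * E (dual_idx B) $ f) *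
        (\<Sum>c\<in>UNIV. \<Sum>d\<in>UNIV. Q e f c d * (E C $ c * E D $ d))))"
    unfolding W by (rule sum2_mult_sum2_swap)
  finally show ?thesis by (simp add: W_def)
qed

lemma frame_coord_Tsop:
  "frame_coord (Tsop g T Z) =
    frame_op n (\<lambda>A B C D. fcomp T l nv m (dual_idx A) C (dual_idx B) D) (frame_coord Z)"
proof (intro ext)
  fix A B
  show "frame_coord (Tsop g T Z) A B =
      frame_op n (\<lambda>A B C D. fcomp T l nv m (dual_idx A) C (dual_idx B) D) (frame_coord Z) A B"
  proof (cases "A \<in> fidx_set n \<and> B \<in> fidx_set n")
    case True
    then have "frame_coord (Tsop g T Z) A B = (\<Sum>C\<in>fidx_set n. \<Sum>D\<in>fidx_set n.
        frame_coord Z C D * tform T (E (dual_idx A)) (E C) (E (dual_idx B)) (E D))"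
      unfolding Tsop_eq_contract by (simp only: frame_coord_contract contract_Tsop_kernel_eq_tform)
    then show ?thesis using True by (simp add: frame_op_def fcomp_def mult.commute)
  qed (auto simp: frame_coord_def frame_op_def)
qed

lemma frame_coord_Top:
  "frame_coord (Top g T Z) =
    frame_op n (\<lambda>A B C D. (1/2) * fcomp T l nv m (dual_idx A) (dual_idx B) C D) (frame_coord Z)"
proof (intro ext)
  fix A B
  show "frame_coord (Top g T Z) A B =
      frame_op n (\<lambda>A B C D. (1/2) * fcomp T l nv m (dual_idx A) (dual_idx B) C D) (frame_coord Z) A B"
  proof (cases "A \<in> fidx_set n \<and> B \<in> fidx_set n")
    case True
    have "frame_coord (\<lambda>a b. (1/2) * X a b) A B = (1/2) * frame_coord X A B" for X
      by (simp add: frame_coord_def sum_distrib_left mult_ac)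
    with True have "frame_coord (Top g T Z) A B = (1/2) * (\<Sum>C\<in>fidx_set n. \<Sum>D\<in>fidx_set n.
        frame_coord Z C D * tform T (E (dual_idx A)) (E (dual_idx B)) (E C) (E D))"
      unfolding Top_eq_contract by (simp only: frame_coord_contract contract_Top_kernel_eq_tform)
    then show ?thesis using True by (simp add: frame_op_def fcomp_def sum_distrib_left mult_ac)
  qed (auto simp: frame_coord_def frame_op_def)
qed

lemma frame_tensor_swap:
  assumes "\<And>A B. z A B = s * z B A"
  shows "frame_tensor z c d = s * frame_tensor z d c"
proof -
  have "s * frame_tensor z d c = (\<Sum>D\<in>fidx_set n. \<Sum>C\<in>fidx_set n. s * z C D * (E C $ d * E D $ c))"
    unfolding frame_tensor_def by (subst sum.swap) (simp add: sum_distrib_left mult_ac)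
  also have "\<dots> = frame_tensor z c d"
    unfolding frame_tensor_def
  proof (intro sum.cong refl)
    fix C D
    show "s * z D C * (E D $ d * E C $ c) = z C D * (E C $ c * E D $ d)"
      by (simp only: assms[of C D]) (simp add: mult_ac)
  qed
  finally show ?thesis by simp
qed

lemma frame_tensor_mem_sym2:
  assumes "\<forall>A B. z A B = z B A"
  shows "frame_tensor z \<in> sym2"
proof -
  have "z A B = 1 * z B A" for A B
    using assms[rule_format, of A B] by simp
  then have swap: "frame_tensor z a b = 1 * frame_tensor z b a" for a b
    by (rule frame_tensor_swap)
  have "frame_tensor z a b = frame_tensor z b a" for a b
    using swap[of a b] by simp
  then show ?thesis unfolding sym2_def by blast
qed

lemma frame_tensor_mem_bivectors:
  assumes "\<forall>A B. z A B = - z B A"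
  shows "frame_tensor z \<in> bivectors"
proof -
  have "z A B = -1 * z B A" for A B
    using assms[rule_format, of A B] by simp
  then have swap: "frame_tensor z a b = -1 * frame_tensor z b a" for a b
    by (rule frame_tensor_swap)
  have "frame_tensor z a b = - frame_tensor z b a" for a b
    using swap[of a b] by simp
  then show ?thesis unfolding bivectors_def by blast
qed

lemma frame_op_nilpotent:
  assumes "nilpotent_on S F"
    and coord: "\<And>Z. frame_coord (F Z) = frame_op n K (frame_coord Z)"
    and P: "\<And>z. P z \<Longrightarrow> frame_tensor z \<in> S \<and> frame_supported n z"
  shows "\<exists>k. \<forall>z. P z \<longrightarrow> (frame_op n K ^^ k) z = (\<lambda>A B. 0)"
proof -
  obtain k where k: "\<forall>Z\<in>S. (F ^^ k) Z = (\<lambda>a b. 0)"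
    using assms(1) unfolding nilpotent_on_def by blast
  have iter: "frame_coord ((F ^^ j) Z) = (frame_op n K ^^ j) (frame_coord Z)" for j Z
    by (induction j) (simp_all add: coord)
  have "(frame_op n K ^^ k) z = (\<lambda>A B. 0)" if "P z" for z
  proof -
    have "(frame_op n K ^^ k) z = frame_coord ((F ^^ k) (frame_tensor z))"
      using iter frame_coord_frame_tensor P[OF that] by simp
    also have "\<dots> = (\<lambda>A B. 0)"
      using k P[OF that] by (simp add: frame_coord_def fun_eq_iff)
    finally show ?thesis .
  qed
  then show ?thesis by blast
qed

lemma typeII_frame_tensor_fcomp:
  assumes antisym: "\<And>a b c d. T a b c d = - T b a c d"
    and pairsym: "\<And>a b c d. T a b c d = T c d a b"
    and pos: "comps_vanish T l nv m {w. w > 0}"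
    and nilT: "nilpotent_on bivectors (Top g T)"
    and nilTs: "nilpotent_on sym2 (Tsop g T)"
  shows "typeII_frame_tensor n (fcomp T l nv m)"
proof
  show "fcomp T l nv m A B C D = - fcomp T l nv m B A C D" for A B C D
    unfolding fcomp_def by (rule tform_swap12[OF antisym])
  show "fcomp T l nv m A B C D = fcomp T l nv m C D A B" for A B C D
    unfolding fcomp_def by (rule tform_swap_pairs[OF pairsym])
  show "fcomp T l nv m A B C D = 0" if "A \<in> fidx_set n" "B \<in> fidx_set n" "C \<in> fidx_set n"
    "D \<in> fidx_set n" "bw A + bw B + bw C + bw D > 0" for A B C D
    using pos that unfolding comps_vanish_def fidx_set_def n_eq by auto
  show "\<exists>k. \<forall>z. (\<forall>A B. z A B = z B A) \<and> frame_supported n z \<longrightarrow>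
      (frame_op n (\<lambda>A B C D. fcomp T l nv m (dual_idx A) C (dual_idx B) D) ^^ k) z = (\<lambda>A B. 0)"
    by (rule frame_op_nilpotent[OF nilTs frame_coord_Tsop]) (use frame_tensor_mem_sym2 in blast)
  show "\<exists>k. \<forall>z. (\<forall>A B. z A B = - z B A) \<and> frame_supported n z \<longrightarrow>
      (frame_op n (\<lambda>A B C D. (1/2) * fcomp T l nv m (dual_idx A) (dual_idx B) C D) ^^ k) z = (\<lambda>A B. 0)"
    by (rule frame_op_nilpotent[OF nilT frame_coord_Top]) (use frame_tensor_mem_bivectors in blast)
qed

end

theorem proposition2:
  fixes g :: "'d::finite \<Rightarrow> 'd \<Rightarrow> real"
    and T :: "'d \<Rightarrow> 'd \<Rightarrow> 'd \<Rightarrow> 'd \<Rightarrow> real"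
  assumes dim: "CARD('d) \<ge> 2"
    and lor: "lorentzian g"
    and antisym: "\<And>a b c d. T a b c d = - T b a c d"
    and pairsym: "\<And>a b c d. T a b c d = T c d a b"
    and typeII: "\<exists>l nv m. null_frame g l nv m \<and> comps_vanish T l nv m {w. w > 0}"
    and nilT: "nilpotent_on bivectors (Top g T)"
    and nilTs: "nilpotent_on sym2 (Tsop g T)"
  shows "\<exists>l nv m. null_frame g l nv m \<and> comps_vanish T l nv m {0, 1, 2}"
proof -
  obtain l nv m where frame: "null_frame g l nv m" and pos: "comps_vanish T l nv m {w. w > 0}"
    using typeII by blast
  define n where "n = CARD('d) - 2"
  interpret basis: null_frame_basis g l nv m n
    using lor frame dim n_def by unfold_locales (auto simp: lorentzian_def)
  interpret typeII_frame_tensor n "fcomp T l nv m"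
    by (rule basis.typeII_frame_tensor_fcomp[OF antisym pairsym pos nilT nilTs])
  have "comps_vanish T l nv m {0, 1, 2}"
    using bw_nonneg_eq_0 unfolding comps_vanish_def fidx_set_def n_def by blast
  then show ?thesis using frame by blast
qed

end
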